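(* In generalized non-signalling theory (box world), a measurement $M=\{(r,\mu_r)\}$ on a system of boxes is maximally informative if and only if every effect $\mu_r$ can be represented by a vector with exactly one non-zero entry, that entry lying between $0$ and $1$.
   Context: Box world (GNST): a box has a finite set of inputs $x$ and outputs $a$. A system of $n$ boxes has states $\mathbf{p}$ given by all collections $p(\mathbf{a}|\mathbf{x})=p(a_1,\ldots,a_n|x_1,\ldots,x_n)\ge 0$ with $\sum_{\mathbf{a}}p(\mathbf{a}|\mathbf{x})=1$ for all $\mathbf{x}$ and satisfying no-signalling: for each $i$, $\sum_{a_i}p(\mathbf{a}|\mathbf{x})$ does not depend on $x_i$. An effect is any linear map $\mu$ from states to $[0,1]$; a vector $\mathbf{R}$ indexed by pairs $(\mathbf{a},\mathbf{x})$ represents $\mu$ if $\mu(\mathbf{p})=\sum_{\mathbf{a},\mathbf{x}}p(\mathbf{a}|\mathbf{x})R(\mathbf{a}|\mathbf{x})$ for all states. A measurement is a finite set $\{(r,\mu_r)\}$ of outcomes and effects with $\sum_r\mu_r$ equal to the constant map $1$; all such are allowed. A measurement $N=\{(s,\nu_s)\}$ refines $M=\{(r,\mu_r)\}$ if the outcome set of $N$ can be partitioned into sets $P_r$ with $\mu_r=\sum_{s\in P_r}\nu_s$ for each $r$; the refinement is trivial if $\nu_s$ is proportional to $\mu_r$ whenever $s\in P_r$. $M$ is maximally informative if it has no non-trivial refinement. *)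

theory Defs
  imports Complex_Main "HOL-Library.FuncSet"
begin

text \<open>A (conditional) probability table p is a function of (a, x); states are taken to vanish
  outside the domain so that each state has a unique representative.\<close>

definition box_system :: "nat \<Rightarrow> (nat \<Rightarrow> 'a set) \<Rightarrow> (nat \<Rightarrow> 'x set) \<Rightarrow> bool" where
  "box_system n A X \<longleftrightarrow> (\<forall>i<n. finite (A i) \<and> A i \<noteq> {} \<and> finite (X i) \<and> X i \<noteq> {})"

definition box_state ::
  "nat \<Rightarrow> (nat \<Rightarrow> 'a set) \<Rightarrow> (nat \<Rightarrow> 'x set) \<Rightarrow> ((nat \<Rightarrow> 'a) \<Rightarrow> (nat \<Rightarrow> 'x) \<Rightarrow> real) \<Rightarrow> bool" where
  "box_state n A X p \<longleftrightarrow>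
     (\<forall>a x. \<not> (a \<in> PiE {..<n} A \<and> x \<in> PiE {..<n} X) \<longrightarrow> p a x = 0) \<and>
     (\<forall>a\<in>PiE {..<n} A. \<forall>x\<in>PiE {..<n} X. 0 \<le> p a x) \<and>
     (\<forall>x\<in>PiE {..<n} X. (\<Sum>a\<in>PiE {..<n} A. p a x) = 1) \<and>
     (\<forall>i<n. \<forall>a\<in>PiE {..<n} A. \<forall>x\<in>PiE {..<n} X. \<forall>x'\<in>PiE {..<n} X.
        (\<forall>j. j \<noteq> i \<longrightarrow> x j = x' j) \<longrightarrow>
        (\<Sum>b\<in>A i. p (a(i := b)) x) = (\<Sum>b\<in>A i. p (a(i := b)) x'))"

definition box_effect ::
  "nat \<Rightarrow> (nat \<Rightarrow> 'a set) \<Rightarrow> (nat \<Rightarrow> 'x set) \<Rightarrow>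
   (((nat \<Rightarrow> 'a) \<Rightarrow> (nat \<Rightarrow> 'x) \<Rightarrow> real) \<Rightarrow> real) \<Rightarrow> bool" where
  "box_effect n A X \<mu> \<longleftrightarrow>
     (\<forall>p. box_state n A X p \<longrightarrow> 0 \<le> \<mu> p \<and> \<mu> p \<le> 1) \<and>
     (\<forall>p q t. box_state n A X p \<longrightarrow> box_state n A X q \<longrightarrow> 0 \<le> t \<longrightarrow> t \<le> 1 \<longrightarrow>
        \<mu> (\<lambda>a x. t * p a x + (1 - t) * q a x) = t * \<mu> p + (1 - t) * \<mu> q)"

definition box_represents ::
  "nat \<Rightarrow> (nat \<Rightarrow> 'a set) \<Rightarrow> (nat \<Rightarrow> 'x set) \<Rightarrow> ((nat \<Rightarrow> 'a) \<Rightarrow> (nat \<Rightarrow> 'x) \<Rightarrow> real) \<Rightarrow>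
   (((nat \<Rightarrow> 'a) \<Rightarrow> (nat \<Rightarrow> 'x) \<Rightarrow> real) \<Rightarrow> real) \<Rightarrow> bool" where
  "box_represents n A X R \<mu> \<longleftrightarrow>
     (\<forall>p. box_state n A X p \<longrightarrow>
        \<mu> p = (\<Sum>a\<in>PiE {..<n} A. \<Sum>x\<in>PiE {..<n} X. p a x * R a x))"

definition box_measurement ::
  "nat \<Rightarrow> (nat \<Rightarrow> 'a set) \<Rightarrow> (nat \<Rightarrow> 'x set) \<Rightarrow> 'r set \<Rightarrow>
   ('r \<Rightarrow> ((nat \<Rightarrow> 'a) \<Rightarrow> (nat \<Rightarrow> 'x) \<Rightarrow> real) \<Rightarrow> real) \<Rightarrow> bool" where
  "box_measurement n A X Out \<mu> \<longleftrightarrow>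
     finite Out \<and> (\<forall>r\<in>Out. box_effect n A X (\<mu> r)) \<and>
     (\<forall>p. box_state n A X p \<longrightarrow> (\<Sum>r\<in>Out. \<mu> r p) = 1)"

text \<open>N = (Out', \<nu>) refines M = (Out, \<mu>) via the partition of Out' into the fibres
  P_r = {s. f s = r} of f.\<close>

definition box_refines_via ::
  "nat \<Rightarrow> (nat \<Rightarrow> 'a set) \<Rightarrow> (nat \<Rightarrow> 'x set) \<Rightarrow>
   's set \<Rightarrow> ('s \<Rightarrow> ((nat \<Rightarrow> 'a) \<Rightarrow> (nat \<Rightarrow> 'x) \<Rightarrow> real) \<Rightarrow> real) \<Rightarrow> ('s \<Rightarrow> 'r) \<Rightarrow>
   'r set \<Rightarrow> ('r \<Rightarrow> ((nat \<Rightarrow> 'a) \<Rightarrow> (nat \<Rightarrow> 'x) \<Rightarrow> real) \<Rightarrow> real) \<Rightarrow> bool" where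
  "box_refines_via n A X Out' \<nu> f Out \<mu> \<longleftrightarrow>
     box_measurement n A X Out' \<nu> \<and> (\<forall>s\<in>Out'. f s \<in> Out) \<and>
     (\<forall>r\<in>Out. \<forall>p. box_state n A X p \<longrightarrow> \<mu> r p = (\<Sum>s\<in>{s\<in>Out'. f s = r}. \<nu> s p))"

definition box_trivial_via ::
  "nat \<Rightarrow> (nat \<Rightarrow> 'a set) \<Rightarrow> (nat \<Rightarrow> 'x set) \<Rightarrow>
   's set \<Rightarrow> ('s \<Rightarrow> ((nat \<Rightarrow> 'a) \<Rightarrow> (nat \<Rightarrow> 'x) \<Rightarrow> real) \<Rightarrow> real) \<Rightarrow> ('s \<Rightarrow> 'r) \<Rightarrow>
   ('r \<Rightarrow> ((nat \<Rightarrow> 'a) \<Rightarrow> (nat \<Rightarrow> 'x) \<Rightarrow> real) \<Rightarrow> real) \<Rightarrow> bool" where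
  "box_trivial_via n A X Out' \<nu> f \<mu> \<longleftrightarrow>
     (\<forall>s\<in>Out'. \<exists>c::real. \<forall>p. box_state n A X p \<longrightarrow> \<nu> s p = c * \<mu> (f s) p)"

text \<open>Maximally informative: every refinement is trivial. Outcome sets of refining measurements
  are finite subsets of nat (no loss of generality, any finite outcome set can be relabelled).\<close>

definition box_max_informative ::
  "nat \<Rightarrow> (nat \<Rightarrow> 'a set) \<Rightarrow> (nat \<Rightarrow> 'x set) \<Rightarrow> 'r set \<Rightarrow>
   ('r \<Rightarrow> ((nat \<Rightarrow> 'a) \<Rightarrow> (nat \<Rightarrow> 'x) \<Rightarrow> real) \<Rightarrow> real) \<Rightarrow> bool" where
  "box_max_informative n A X Out \<mu> \<longleftrightarrow>
     (\<forall>(Out' :: nat set) \<nu> f. box_refines_via n A X Out' \<nu> f Out \<mu> \<longrightarrow>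
        box_trivial_via n A X Out' \<nu> f \<mu>)"

end

theory Submission
  imports Defs
begin

text \<open>Effects are affine functions on the polytope of states.
  If every \<mu> r is a positive multiple of the entry p a0 x0, an effect \<nu> s refining outcome r
  vanishes on the face {p. p a0 x0 = 0}; mixing with a generalised PR box shows that such an effect
  equals p a0 x0 times its value on the deterministic state a0, so the refinement is trivial.
  Conversely, a nonzero effect \<mu> r dominates \<epsilon> * p a0 x0 for some entry: a vertex state on which \<mu> r
  is positive has an entry vanishing on the kernel of \<mu> r, and there are only finitely many
  vertices.  Splitting \<mu> r into \<epsilon> * p a0 x0 and the remainder is a refinement, and its
  triviality forces \<mu> r to be a multiple of p a0 x0.\<close>

definition mix :: "real \<Rightarrow> ('a \<Rightarrow> 'b \<Rightarrow> real) \<Rightarrow> ('a \<Rightarrow> 'b \<Rightarrow> real) \<Rightarrow> 'a \<Rightarrow> 'b \<Rightarrow> real" where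
  "mix t p q = (\<lambda>a x. t * p a x + (1 - t) * q a x)"

lemma mix_apply [simp]: "mix t p q a x = t * p a x + (1 - t) * q a x"
  by (simp add: mix_def)

locale box_world =
  fixes n :: nat and A :: "nat \<Rightarrow> 'a set" and X :: "nat \<Rightarrow> 'x set"
  assumes box_system: "box_system n A X"
begin

abbreviation outputs :: "(nat \<Rightarrow> 'a) set" where "outputs \<equiv> PiE {..<n} A"
abbreviation inputs :: "(nat \<Rightarrow> 'x) set" where "inputs \<equiv> PiE {..<n} X"
abbreviation state where "state \<equiv> box_state n A X"
abbreviation effect where "effect \<equiv> box_effect n A X"

lemma finite_outputs: "finite outputs"
  using box_system unfolding box_system_def by (auto intro: finite_PiE)

lemma finite_inputs: "finite inputs"
  using box_system unfolding box_system_def by (auto intro: finite_PiE)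

lemma inputs_nonempty: "inputs \<noteq> {}"
  using box_system unfolding box_system_def by (auto simp: PiE_eq_empty_iff)

lemma finite_output_set: "i < n \<Longrightarrow> finite (A i)"
  using box_system unfolding box_system_def by auto

lemma fun_upd_in_outputs: "a \<in> outputs \<Longrightarrow> i < n \<Longrightarrow> b \<in> A i \<Longrightarrow> a(i := b) \<in> outputs"
  by (auto simp: PiE_iff extensional_def)

lemma state_outside: "state p \<Longrightarrow> \<not> (a \<in> outputs \<and> x \<in> inputs) \<Longrightarrow> p a x = 0"
  unfolding box_state_def by simp

lemma state_nonneg: "state p \<Longrightarrow> 0 \<le> p a x"
  unfolding box_state_def by (cases "a \<in> outputs \<and> x \<in> inputs") auto

lemma state_sum_outputs: "state p \<Longrightarrow> x \<in> inputs \<Longrightarrow> (\<Sum>a\<in>outputs. p a x) = 1"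
  unfolding box_state_def by blast

lemma state_no_signalling:
  assumes "state p" "i < n" "a \<in> outputs" "x \<in> inputs" "x' \<in> inputs" "\<And>j. j \<noteq> i \<Longrightarrow> x j = x' j"
  shows "(\<Sum>b\<in>A i. p (a(i := b)) x) = (\<Sum>b\<in>A i. p (a(i := b)) x')"
  using assms unfolding box_state_def by blast

lemma state_le_1: "state p \<Longrightarrow> p a x \<le> 1"
proof (cases "a \<in> outputs \<and> x \<in> inputs")
  case True
  assume p: "state p"
  have "p a x \<le> (\<Sum>a\<in>outputs. p a x)"
    using True finite_outputs by (intro member_le_sum) (auto intro: state_nonneg[OF p])
  thus ?thesis using state_sum_outputs[OF p] True by simp
qed (auto simp: state_outside)

lemma state_eqI:
  "state p \<Longrightarrow> state q \<Longrightarrow> (\<And>a x. a \<in> outputs \<Longrightarrow> x \<in> inputs \<Longrightarrow> p a x = q a x) \<Longrightarrow> p = q"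
  by (intro ext) (metis state_outside)

lemma state_mixI:
  assumes p: "state p" and q: "state q"
    and nonneg: "\<And>a x. a \<in> outputs \<Longrightarrow> x \<in> inputs \<Longrightarrow> 0 \<le> mix t p q a x"
  shows "state (mix t p q)"
  unfolding box_state_def
proof (intro conjI ballI allI impI)
  fix a x assume "\<not> (a \<in> outputs \<and> x \<in> inputs)"
  thus "mix t p q a x = 0" using state_outside[OF p] state_outside[OF q] by simp
next
  fix a x assume "a \<in> outputs" "x \<in> inputs" thus "0 \<le> mix t p q a x" by (rule nonneg)
next
  fix x assume x: "x \<in> inputs"
  have "(\<Sum>a\<in>outputs. mix t p q a x) = t * (\<Sum>a\<in>outputs. p a x) + (1 - t) * (\<Sum>a\<in>outputs. q a x)"
    by (simp add: sum.distrib sum_distrib_left)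
  thus "(\<Sum>a\<in>outputs. mix t p q a x) = 1"
    using state_sum_outputs[OF p x] state_sum_outputs[OF q x] by simp
next
  fix i a x x' assume ns: "i < n" "a \<in> outputs" "x \<in> inputs" "x' \<in> inputs" "\<forall>j. j \<noteq> i \<longrightarrow> x j = x' j"
  have split: "(\<Sum>b\<in>A i. mix t p q (a(i := b)) y) =
      t * (\<Sum>b\<in>A i. p (a(i := b)) y) + (1 - t) * (\<Sum>b\<in>A i. q (a(i := b)) y)" for y
    by (simp add: sum.distrib sum_distrib_left)
  show "(\<Sum>b\<in>A i. mix t p q (a(i := b)) x) = (\<Sum>b\<in>A i. mix t p q (a(i := b)) x')"
    unfolding split using state_no_signalling[OF p ns(1-4)] state_no_signalling[OF q ns(1-4)] ns(5)
    by simp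
qed

lemma state_mix:
  assumes p: "state p" and q: "state q" and t: "0 \<le> t" "t \<le> 1"
  shows "state (mix t p q)"
proof (rule state_mixI[OF p q])
  fix a x
  show "0 \<le> mix t p q a x"
    using t state_nonneg[OF p, of a x] state_nonneg[OF q, of a x] by simp
qed

lemma state_peel_off:
  assumes m: "state m" and d: "state d" and l: "0 \<le> l" "l < 1"
    and below: "\<And>a x. a \<in> outputs \<Longrightarrow> x \<in> inputs \<Longrightarrow> l * d a x \<le> m a x"
  obtains w where "state w" "m = mix l d w" "\<And>a x. (1 - l) * w a x = m a x - l * d a x"
proof
  define w where "w = mix (1 / (1 - l)) m d"
  have w_eq: "(1 - l) * w a x = m a x - l * d a x" for a x
  proof -
    have expand: "(1 - l) * (c * M + (1 - c) * D) = (1 - l) * c * M + ((1 - l) - (1 - l) * c) * D"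
      for c M D :: real by (simp add: algebra_simps)
    have "(1 - l) * (1 / (1 - l)) = 1" using l by simp
    with expand[of "1 / (1 - l)" "m a x" "d a x"] show ?thesis by (simp add: w_def)
  qed
  show "state w" unfolding w_def
  proof (rule state_mixI[OF m d])
    fix a x assume "a \<in> outputs" "x \<in> inputs"
    hence "0 \<le> (1 - l) * w a x" using below w_eq by simp
    thus "0 \<le> mix (1 / (1 - l)) m d a x" using l by (simp add: w_def zero_le_mult_iff)
  qed
  show "m = mix l d w"
  proof (intro ext)
    fix a x show "m a x = mix l d w a x" using w_eq[of a x] by simp
  qed
  show "(1 - l) * w a x = m a x - l * d a x" for a x by (rule w_eq)
qed

lemma effect_iff:
  "effect \<mu> \<longleftrightarrow> (\<forall>p. state p \<longrightarrow> 0 \<le> \<mu> p \<and> \<mu> p \<le> 1) \<and>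
     (\<forall>p q t. state p \<longrightarrow> state q \<longrightarrow> 0 \<le> t \<longrightarrow> t \<le> 1 \<longrightarrow> \<mu> (mix t p q) = t * \<mu> p + (1 - t) * \<mu> q)"
  unfolding box_effect_def mix_def ..

lemma effect_mix: "effect \<mu> \<Longrightarrow> state p \<Longrightarrow> state q \<Longrightarrow> 0 \<le> t \<Longrightarrow> t \<le> 1 \<Longrightarrow>
    \<mu> (mix t p q) = t * \<mu> p + (1 - t) * \<mu> q"
  unfolding effect_iff by blast

lemma effect_nonneg: "effect \<mu> \<Longrightarrow> state p \<Longrightarrow> 0 \<le> \<mu> p"
  unfolding effect_iff by blast

lemma effect_le_1: "effect \<mu> \<Longrightarrow> state p \<Longrightarrow> \<mu> p \<le> 1"
  unfolding effect_iff by blast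

definition deterministic :: "(nat \<Rightarrow> 'a) \<Rightarrow> (nat \<Rightarrow> 'a) \<Rightarrow> (nat \<Rightarrow> 'x) \<Rightarrow> real" where
  "deterministic a0 = (\<lambda>a x. if a = a0 \<and> x \<in> inputs then 1 else 0)"

lemma deterministic_apply: "x \<in> inputs \<Longrightarrow> deterministic a0 a x = (if a = a0 then 1 else 0)"
  by (simp add: deterministic_def)

lemma state_deterministic:
  assumes a0: "a0 \<in> outputs"
  shows "state (deterministic a0)"
  unfolding box_state_def deterministic_def
proof (intro conjI ballI allI impI)
  fix i a x x' assume i: "i < n" and a: "a \<in> outputs" and x: "x \<in> inputs" "x' \<in> inputs"
  have a0i: "a0 i \<in> A i" using a0 i by (auto simp: PiE_iff)
  have column: "(\<Sum>b\<in>A i. if a(i := b) = a0 \<and> y \<in> inputs then 1 else 0) =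
      (if a(i := a0 i) = a0 then 1 else (0::real))" if y: "y \<in> inputs" for y
  proof (cases "a(i := a0 i) = a0")
    case True
    hence "a(i := b) = a0 \<longleftrightarrow> b = a0 i" for b by (metis fun_upd_same fun_upd_upd)
    thus ?thesis using True y a0i finite_output_set[OF i] by simp
  next
    case False
    hence "a(i := b) \<noteq> a0" for b by (metis fun_upd_same fun_upd_upd)
    thus ?thesis using False by simp
  qed
  show "(\<Sum>b\<in>A i. if a(i := b) = a0 \<and> x \<in> inputs then 1 else 0) =
        (\<Sum>b\<in>A i. if a(i := b) = a0 \<and> x' \<in> inputs then 1 else 0 :: real)"
    using column x by simp
qed (use a0 finite_outputs in simp_all)

subsection \<open>Effects vanishing off one entry\<close>

definition alt_boxes :: "(nat \<Rightarrow> 'a) \<Rightarrow> nat set" where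
  "alt_boxes a0 = {i. i < n \<and> (\<exists>b\<in>A i. b \<noteq> a0 i)}"

definition alt_output :: "(nat \<Rightarrow> 'a) \<Rightarrow> nat \<Rightarrow> 'a" where
  "alt_output a0 i = (SOME b. b \<in> A i \<and> b \<noteq> a0 i)"

lemma alt_output_spec: "i \<in> alt_boxes a0 \<Longrightarrow> alt_output a0 i \<in> A i \<and> alt_output a0 i \<noteq> a0 i"
  unfolding alt_output_def alt_boxes_def by (rule someI_ex) auto

lemma output_set_eq_singleton: "a0 \<in> outputs \<Longrightarrow> i < n \<Longrightarrow> i \<notin> alt_boxes a0 \<Longrightarrow> A i = {a0 i}"
  unfolding alt_boxes_def by (auto simp: PiE_iff)

lemma outputs_eq_singleton:
  assumes a0: "a0 \<in> outputs" and no_alt: "alt_boxes a0 = {}"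
  shows "outputs = {a0}"
proof -
  have "a = a0" if a: "a \<in> outputs" for a
  proof (rule PiE_ext[OF a a0])
    fix i assume i: "i \<in> {..<n}"
    hence "A i = {a0 i}" using output_set_eq_singleton[OF a0] no_alt by simp
    thus "a i = a0 i" using a i by (auto simp: PiE_iff)
  qed
  thus ?thesis using a0 by blast
qed

text \<open>For a box i with A i = {a0 i}, the no-signalling sum over A i is the single entry p a0 x.\<close>

lemma state_entry_eq_if_agree_on_alt_boxes:
  assumes p: "state p" and a0: "a0 \<in> outputs" and x0: "x0 \<in> inputs"
  shows "x \<in> inputs \<Longrightarrow> (\<forall>i\<in>alt_boxes a0. x i = x0 i) \<Longrightarrow> p a0 x = p a0 x0"
proof (induction "card {i. i < n \<and> x i \<noteq> x0 i}" arbitrary: x rule: less_induct)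
  case less
  show ?case
  proof (cases "{i. i < n \<and> x i \<noteq> x0 i} = {}")
    case True
    then have "x = x0" using PiE_ext[OF less.prems(1) x0] by auto
    thus ?thesis by simp
  next
    case False
    then obtain i where i: "i < n" "x i \<noteq> x0 i" by auto
    define x' where "x' = x(i := x0 i)"
    have x': "x' \<in> inputs"
      using less.prems(1) x0 i unfolding x'_def by (auto simp: PiE_iff extensional_def)
    have "i \<notin> alt_boxes a0" using less.prems(2) i by auto
    hence Ai: "A i = {a0 i}" by (rule output_set_eq_singleton[OF a0 i(1)])
    have "{j. j < n \<and> x' j \<noteq> x0 j} \<subset> {j. j < n \<and> x j \<noteq> x0 j}" using i by (auto simp: x'_def)
    hence "card {j. j < n \<and> x' j \<noteq> x0 j} < card {j. j < n \<and> x j \<noteq> x0 j}"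
      by (rule psubset_card_mono[rotated]) auto
    moreover have "\<forall>j\<in>alt_boxes a0. x' j = x0 j" using less.prems(2) by (auto simp: x'_def)
    ultimately have "p a0 x' = p a0 x0" using less.hyps x' by blast
    moreover have "(\<Sum>b\<in>A i. p (a0(i := b)) x) = (\<Sum>b\<in>A i. p (a0(i := b)) x')"
      by (rule state_no_signalling[OF p i(1) a0 less.prems(1) x']) (simp add: x'_def)
    ultimately show ?thesis using Ai by simp
  qed
qed

text \<open>The witness state: on each box i with an alternative output, the output is a0 i or
  alt_output a0 i with probability 1/2 each, and the parity of the number of alternative outputs is
  even exactly when the input differs from x0 on alt_boxes a0 (a generalised PR box).  All marginals
  are uniform, so it is no-signalling; its entry at (a0, x0) vanishes, while its entry at (a0, x)
  is positive for every input x differing from x0 on alt_boxes a0.\<close>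

definition coin :: "(nat \<Rightarrow> 'a) \<Rightarrow> nat \<Rightarrow> 'a \<Rightarrow> real" where
  "coin a0 i b =
    (if i \<in> alt_boxes a0 then (if b = a0 i \<or> b = alt_output a0 i then 1/2 else 0) else 1)"

definition output_sign :: "(nat \<Rightarrow> 'a) \<Rightarrow> nat \<Rightarrow> 'a \<Rightarrow> real" where
  "output_sign a0 i b = (if i \<in> alt_boxes a0 \<and> b \<noteq> a0 i then -1 else 1)"

definition input_sign :: "(nat \<Rightarrow> 'a) \<Rightarrow> (nat \<Rightarrow> 'x) \<Rightarrow> (nat \<Rightarrow> 'x) \<Rightarrow> real" where
  "input_sign a0 x0 x = (if \<forall>i\<in>alt_boxes a0. x i = x0 i then -1 else 1)"

definition witness :: "(nat \<Rightarrow> 'a) \<Rightarrow> (nat \<Rightarrow> 'x) \<Rightarrow> (nat \<Rightarrow> 'a) \<Rightarrow> (nat \<Rightarrow> 'x) \<Rightarrow> real" where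
  "witness a0 x0 a x =
    (if a \<in> outputs \<and> x \<in> inputs
     then (\<Prod>i<n. coin a0 i (a i)) + input_sign a0 x0 x * (\<Prod>i<n. coin a0 i (a i) * output_sign a0 i (a i))
     else 0)"

lemma sum_coin:
  assumes a0: "a0 \<in> outputs" and i: "i < n"
  shows "(\<Sum>b\<in>A i. coin a0 i b) = 1"
proof (cases "i \<in> alt_boxes a0")
  case True
  note alt = alt_output_spec[OF True]
  have a0i: "a0 i \<in> A i" using a0 i by (auto simp: PiE_iff)
  have "(\<Sum>b\<in>A i. coin a0 i b) =
      (\<Sum>b\<in>A i. (if b = a0 i then 1/2 else 0) + (if b = alt_output a0 i then 1/2 else 0))"
    by (rule sum.cong) (use True alt in \<open>auto simp: coin_def\<close>)
  also have "\<dots> = 1" using alt a0i finite_output_set[OF i] by (simp add: sum.distrib)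
  finally show ?thesis .
qed (use output_set_eq_singleton[OF a0 i] in \<open>simp add: coin_def\<close>)

lemma sum_coin_output_sign:
  assumes a0: "a0 \<in> outputs" and i: "i < n"
  shows "(\<Sum>b\<in>A i. coin a0 i b * output_sign a0 i b) = (if i \<in> alt_boxes a0 then 0 else 1)"
proof (cases "i \<in> alt_boxes a0")
  case True
  note alt = alt_output_spec[OF True]
  have a0i: "a0 i \<in> A i" using a0 i by (auto simp: PiE_iff)
  have "(\<Sum>b\<in>A i. coin a0 i b * output_sign a0 i b) =
      (\<Sum>b\<in>A i. (if b = a0 i then 1/2 else 0) - (if b = alt_output a0 i then 1/2 else 0))"
    by (rule sum.cong) (use True alt in \<open>auto simp: coin_def output_sign_def\<close>)
  also have "\<dots> = 0" using alt a0i finite_output_set[OF i] by (simp add: sum_subtractf)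
  finally show ?thesis using True by simp
qed (use output_set_eq_singleton[OF a0 i] in \<open>simp add: coin_def output_sign_def\<close>)

lemma witness_at_a0:
  assumes "a0 \<in> outputs" and "x \<in> inputs"
  shows "witness a0 x0 a0 x = (1 + input_sign a0 x0 x) * (\<Prod>i<n. coin a0 i (a0 i))"
proof -
  have "(\<Prod>i<n. coin a0 i (a0 i) * output_sign a0 i (a0 i)) = (\<Prod>i<n. coin a0 i (a0 i))"
    by (rule prod.cong) (auto simp: output_sign_def)
  thus ?thesis using assms by (simp add: witness_def algebra_simps)
qed

lemma coin_a0_pos: "0 < (\<Prod>i<n. coin a0 i (a0 i))"
  by (rule prod_pos) (auto simp: coin_def)

lemma witness_sum_column:
  assumes a0: "a0 \<in> outputs" and i: "i < n" and a: "a \<in> outputs" and y: "y \<in> inputs"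
  shows "(\<Sum>b\<in>A i. witness a0 x0 (a(i := b)) y) =
    (\<Prod>j\<in>{..<n}-{i}. coin a0 j (a j)) +
    (if i \<in> alt_boxes a0 then 0
     else input_sign a0 x0 y * (\<Prod>j\<in>{..<n}-{i}. coin a0 j (a j) * output_sign a0 j (a j)))"
proof -
  define W where "W = (\<Prod>j\<in>{..<n}-{i}. coin a0 j (a j))"
  define S where "S = (\<Prod>j\<in>{..<n}-{i}. coin a0 j (a j) * output_sign a0 j (a j))"
  have entry: "witness a0 x0 (a(i := b)) y =
      coin a0 i b * W + input_sign a0 x0 y * (S * (coin a0 i b * output_sign a0 i b))"
    if b: "b \<in> A i" for b
  proof -
    have "(\<Prod>j<n. coin a0 j ((a(i := b)) j)) = coin a0 i b * W"
      unfolding W_def using i by (subst prod.remove[of _ i]) (auto intro!: prod.cong)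
    moreover have "(\<Prod>j<n. coin a0 j ((a(i := b)) j) * output_sign a0 j ((a(i := b)) j)) =
        S * (coin a0 i b * output_sign a0 i b)"
      unfolding S_def using i by (subst prod.remove[of _ i]) (auto intro!: prod.cong)
    ultimately show ?thesis using fun_upd_in_outputs[OF a i b] y by (simp add: witness_def)
  qed
  have "(\<Sum>b\<in>A i. witness a0 x0 (a(i := b)) y) =
      (\<Sum>b\<in>A i. coin a0 i b) * W + input_sign a0 x0 y * (S * (\<Sum>b\<in>A i. coin a0 i b * output_sign a0 i b))"
    by (simp add: entry sum.distrib sum_distrib_left sum_distrib_right)
  thus ?thesis using sum_coin[OF a0 i] sum_coin_output_sign[OF a0 i] by (simp add: W_def S_def)
qed

lemma state_witness:
  assumes a0: "a0 \<in> outputs" and alt: "alt_boxes a0 \<noteq> {}"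
  shows "state (witness a0 x0)"
  unfolding box_state_def
proof (intro conjI ballI allI impI)
  fix a x assume "\<not> (a \<in> outputs \<and> x \<in> inputs)"
  thus "witness a0 x0 a x = 0" unfolding witness_def by auto
next
  fix a x assume ax: "a \<in> outputs" "x \<in> inputs"
  have "0 \<le> (\<Prod>i<n. coin a0 i (a i))" by (rule prod_nonneg) (auto simp: coin_def)
  moreover have "(\<Prod>i<n. \<bar>output_sign a0 i (a i)\<bar>) = 1"
    by (rule prod.neutral) (simp add: output_sign_def)
  hence "\<bar>input_sign a0 x0 x * (\<Prod>i<n. output_sign a0 i (a i))\<bar> = 1"
    by (simp add: abs_mult abs_prod input_sign_def)
  hence "0 \<le> 1 + input_sign a0 x0 x * (\<Prod>i<n. output_sign a0 i (a i))" by linarith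
  ultimately have "0 \<le> (\<Prod>i<n. coin a0 i (a i)) * (1 + input_sign a0 x0 x * (\<Prod>i<n. output_sign a0 i (a i)))"
    by simp
  thus "0 \<le> witness a0 x0 a x" using ax by (simp add: witness_def prod.distrib algebra_simps)
next
  fix x assume x: "x \<in> inputs"
  have fin: "\<And>i. i \<in> {..<n} \<Longrightarrow> finite (A i)" using finite_output_set by auto
  have total: "(\<Sum>a\<in>outputs. \<Prod>i<n. coin a0 i (a i)) = 1"
    using prod_sum_PiE[of "{..<n}" A "coin a0", OF _ fin] sum_coin[OF a0] by simp
  obtain k where k: "k \<in> alt_boxes a0" using alt by auto
  have "(\<Sum>a\<in>outputs. \<Prod>i<n. coin a0 i (a i) * output_sign a0 i (a i)) =
      (\<Prod>i<n. \<Sum>b\<in>A i. coin a0 i b * output_sign a0 i b)"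
    using prod_sum_PiE[of "{..<n}" A "\<lambda>i b. coin a0 i b * output_sign a0 i b", OF _ fin] by simp
  also have "\<dots> = 0"
    using k sum_coin_output_sign[OF a0] by (intro prod_zero) (auto simp: alt_boxes_def intro!: bexI[of _ k])
  finally show "(\<Sum>a\<in>outputs. witness a0 x0 a x) = 1"
    using total x by (simp add: witness_def sum.distrib flip: sum_distrib_left)
next
  fix i a x x' assume i: "i < n" and a: "a \<in> outputs" and x: "x \<in> inputs" "x' \<in> inputs"
    and agree: "\<forall>j. j \<noteq> i \<longrightarrow> x j = x' j"
  have "i \<notin> alt_boxes a0 \<Longrightarrow> input_sign a0 x0 x = input_sign a0 x0 x'"
    using agree unfolding input_sign_def by metis
  thus "(\<Sum>b\<in>A i. witness a0 x0 (a(i := b)) x) = (\<Sum>b\<in>A i. witness a0 x0 (a(i := b)) x')"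
    by (simp add: witness_sum_column[OF a0 i a x(1)] witness_sum_column[OF a0 i a x(2)])
qed

lemma effect_vanishing_off_entry:
  assumes a0: "a0 \<in> outputs" and x0: "x0 \<in> inputs" and \<nu>: "effect \<nu>"
    and vanish: "\<And>z. state z \<Longrightarrow> z a0 x0 = 0 \<Longrightarrow> \<nu> z = 0" and p: "state p"
  shows "\<nu> p = p a0 x0 * \<nu> (deterministic a0)"
proof (cases "alt_boxes a0 = {}")
  case True
  have "p = deterministic a0"
  proof (rule state_eqI[OF p state_deterministic[OF a0]])
    fix a x assume "a \<in> outputs" "x \<in> inputs"
    thus "p a x = deterministic a0 a x"
      using state_sum_outputs[OF p, of x] outputs_eq_singleton[OF a0 True] by (simp add: deterministic_apply)
  qed
  moreover have "deterministic a0 a0 x0 = 1" using x0 by (simp add: deterministic_apply)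
  ultimately show ?thesis by simp
next
  case False
  text \<open>Mixing p with the witness raises every entry p a0 x with x \<noteq> x0 on alt_boxes a0 enough
    that a multiple t = p a0 x0 of the deterministic state can be peeled off; what remains is a
    state vanishing at (a0, x0).\<close>
  define t where "t = p a0 x0"
  define d where "d = deterministic a0"
  define z where "z = witness a0 x0"
  define W where "W = (\<Prod>i<n. coin a0 i (a0 i))"
  have d: "state d" unfolding d_def by (rule state_deterministic[OF a0])
  have z: "state z" unfolding z_def by (rule state_witness[OF a0 False])
  have W: "0 < W" unfolding W_def by (rule coin_a0_pos)
  have z_a0: "z a0 x = (1 + input_sign a0 x0 x) * W" if "x \<in> inputs" for x
    unfolding z_def W_def by (rule witness_at_a0[OF a0 that])
  have "\<nu> z = 0" using vanish[OF z] z_a0[OF x0] by (simp add: input_sign_def)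
  define l where "l = 2 * W / (1 + 2 * W)"
  have l: "0 < l" "l < 1" and lW: "(1 - l) * (2 * W) = l" using W by (auto simp: l_def field_simps)
  have t: "0 \<le> t" "t \<le> 1" unfolding t_def using state_nonneg[OF p] state_le_1[OF p] .
  have "l * t \<le> l" using l t by (simp add: mult_left_le)
  hence lt: "0 \<le> l * t" "l * t < 1" using l t by (simp, linarith)
  define m where "m = mix l p z"
  have m: "state m" unfolding m_def using state_mix[OF p z] l by simp
  have "\<nu> m = l * \<nu> p" unfolding m_def using effect_mix[OF \<nu> p z] l \<open>\<nu> z = 0\<close> by simp
  have below: "l * t * d a x \<le> m a x" if ax: "a \<in> outputs" "x \<in> inputs" for a x
  proof (cases "a = a0 \<and> (\<forall>i\<in>alt_boxes a0. x i = x0 i)")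
    case True
    hence "p a0 x = t" unfolding t_def by (intro state_entry_eq_if_agree_on_alt_boxes[OF p a0 x0 ax(2)]) simp
    thus ?thesis using True l ax state_nonneg[OF z, of a0 x] by (simp add: m_def d_def deterministic_apply)
  next
    case False
    show ?thesis
    proof (cases "a = a0")
      case True
      with False have "input_sign a0 x0 x = 1" by (auto simp: input_sign_def)
      hence "z a0 x = 2 * W" using z_a0[OF ax(2)] by simp
      hence "m a x = l * p a0 x + l" using True lW by (simp add: m_def)
      moreover have "l * t \<le> l" using l t by (simp add: mult_left_le)
      moreover have "0 \<le> l * p a0 x" using l state_nonneg[OF p, of a0 x] by simp
      ultimately show ?thesis using True ax by (simp add: d_def deterministic_apply)
    qed (use ax state_nonneg[OF m] in \<open>simp add: d_def deterministic_apply\<close>)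
  qed
  obtain w where w: "state w" and m_split: "m = mix (l * t) d w"
    and w_entry: "\<And>a x. (1 - l * t) * w a x = m a x - l * t * d a x"
    using state_peel_off[OF m d lt below] by blast
  have "(1 - l * t) * w a0 x0 = 0"
    using w_entry[of a0 x0] z_a0[OF x0] x0 by (simp add: m_def d_def deterministic_apply t_def input_sign_def)
  hence "\<nu> w = 0" using vanish[OF w] lt by simp
  hence "\<nu> m = l * t * \<nu> d" using m_split effect_mix[OF \<nu> d w] lt by simp
  thus ?thesis using \<open>\<nu> m = l * \<nu> p\<close> l by (simp add: t_def d_def)
qed

subsection \<open>Vertex states\<close>

definition support :: "((nat \<Rightarrow> 'a) \<Rightarrow> (nat \<Rightarrow> 'x) \<Rightarrow> real) \<Rightarrow> ((nat \<Rightarrow> 'a) \<times> (nat \<Rightarrow> 'x)) set" where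
  "support p = {(a, x). a \<in> outputs \<and> x \<in> inputs \<and> p a x \<noteq> 0}"

text \<open>These are the vertices of the polytope of states.\<close>

definition vertex_state :: "((nat \<Rightarrow> 'a) \<Rightarrow> (nat \<Rightarrow> 'x) \<Rightarrow> real) \<Rightarrow> bool" where
  "vertex_state p \<longleftrightarrow> state p \<and> (\<forall>q. state q \<longrightarrow> support q \<subseteq> support p \<longrightarrow> q = p)"

lemma finite_support: "finite (support p)"
  by (rule finite_subset[of _ "outputs \<times> inputs"]) (auto simp: support_def finite_outputs finite_inputs)

lemma support_subset_vanish:
  assumes "state q" "support q \<subseteq> support p" "p a x = 0"
  shows "q a x = 0"
  using assms state_outside[of q a x] by (auto simp: support_def)

lemma support_mix_subset:
  assumes "state q" "support q \<subseteq> support p"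
  shows "support (mix t p q) \<subseteq> support p"
  using support_subset_vanish[OF assms] by (auto simp: support_def)

lemma exists_entry_below:
  assumes p: "state p" and q: "state q" and a': "a' \<in> outputs" and x: "x \<in> inputs"
    and ne: "q a' x \<noteq> p a' x"
  obtains a where "a \<in> outputs" "q a x < p a x"
proof (rule ccontr)
  assume "\<not> thesis"
  hence le: "\<forall>a\<in>outputs. p a x \<le> q a x" using that by force
  hence "p a' x < q a' x" using a' ne by force
  hence "(\<Sum>a\<in>outputs. p a x) < (\<Sum>a\<in>outputs. q a x)"
    using le a' finite_outputs by (intro sum_strict_mono_ex1) auto
  thus False using state_sum_outputs[OF p x] state_sum_outputs[OF q x] by simp
qed

text \<open>Moving from p along the line through q (away from q if c < 0), the first entry of the
  support to hit zero gives a state of strictly smaller support.\<close>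

lemma state_exit_along_line:
  assumes p: "state p" and q: "state q" and sub: "support q \<subseteq> support p"
    and a': "a' \<in> outputs" and x': "x' \<in> inputs" and dir: "0 < c * (p a' x' - q a' x')"
  obtains s where "0 < s" "state (mix (1 - c * s) p q)" "support (mix (1 - c * s) p q) \<subset> support p"
proof -
  define D where "D a x = c * (p a x - q a x)" for a x
  have line: "mix (1 - c * s) p q a x = p a x - s * D a x" for s a x
    by (simp add: D_def algebra_simps)
  have p_pos: "0 < p a x" if "0 < D a x" for a x
  proof -
    have "p a x \<noteq> 0" using that support_subset_vanish[OF q sub, of a x] by (auto simp: D_def)
    thus ?thesis using state_nonneg[OF p, of a x] by simp
  qed
  define E where "E = {(a, x). a \<in> outputs \<and> x \<in> inputs \<and> 0 < D a x}"
  have E: "finite E" "E \<noteq> {}"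
    using a' x' dir finite_outputs finite_inputs
    by (auto simp: E_def D_def intro: finite_subset[of _ "outputs \<times> inputs"])
  define s where "s = Min ((\<lambda>(a, x). p a x / D a x) ` E)"
  have "s \<in> (\<lambda>(a, x). p a x / D a x) ` E" unfolding s_def using E by (intro Min_in) auto
  then obtain a1 x1 where e1: "(a1, x1) \<in> E" and s1: "s = p a1 x1 / D a1 x1" by auto
  have s_le: "s \<le> p a x / D a x" if "(a, x) \<in> E" for a x
  proof -
    have "p a x / D a x \<in> (\<lambda>(a, x). p a x / D a x) ` E" using that by force
    thus ?thesis unfolding s_def using E(1) by simp
  qed
  have D1: "0 < D a1 x1" using e1 by (simp add: E_def)
  have "0 < s" using s1 D1 p_pos[OF D1] by simp
  define r where "r = mix (1 - c * s) p q"
  have r_apply: "r a x = p a x - s * D a x" for a x unfolding r_def by (rule line)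
  have "state r" unfolding r_def
  proof (rule state_mixI[OF p q])
    fix a x assume ax: "a \<in> outputs" "x \<in> inputs"
    have "s * D a x \<le> p a x"
    proof (cases "0 < D a x")
      case True
      hence "s * D a x \<le> p a x / D a x * D a x"
        using s_le[of a x] ax by (intro mult_right_mono) (auto simp: E_def)
      thus ?thesis using True by simp
    next
      case False
      hence "s * D a x \<le> 0" using \<open>0 < s\<close> by (simp add: mult_nonneg_nonpos)
      thus ?thesis using state_nonneg[OF p, of a x] by linarith
    qed
    thus "0 \<le> mix (1 - c * s) p q a x" unfolding line by linarith
  qed
  moreover have "support r \<subseteq> support p"
    unfolding r_def by (rule support_mix_subset[OF q sub])
  moreover have "(a1, x1) \<in> support p - support r"
    using e1 p_pos[OF D1] s1 D1 by (auto simp: support_def E_def r_apply)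
  ultimately show thesis using that \<open>0 < s\<close> unfolding r_def by blast
qed

lemma non_vertex_state_split:
  assumes p: "state p" and not_vertex: "\<not> vertex_state p"
  obtains p1 p2 \<theta> where "state p1" "state p2" "0 \<le> \<theta>" "\<theta> \<le> 1"
    "support p1 \<subset> support p" "support p2 \<subset> support p" "p = mix \<theta> p1 p2"
proof -
  obtain q where q: "state q" "support q \<subseteq> support p" "q \<noteq> p"
    using p not_vertex unfolding vertex_state_def by blast
  obtain a' x' where a': "a' \<in> outputs" and x': "x' \<in> inputs" and ne: "q a' x' \<noteq> p a' x'"
    using state_eqI[OF q(1) p] q(3) by metis
  obtain a1 where a1: "a1 \<in> outputs" "q a1 x' < p a1 x'"
    using exists_entry_below[OF p q(1) a' x' ne] .
  obtain a2 where a2: "a2 \<in> outputs" "p a2 x' < q a2 x'"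
    using exists_entry_below[OF q(1) p a' x'] ne by metis
  obtain s1 where s1: "0 < s1" "state (mix (1 - 1 * s1) p q)" "support (mix (1 - 1 * s1) p q) \<subset> support p"
    using state_exit_along_line[OF p q(1,2) a1(1) x', of 1] a1(2) by auto
  obtain s2 where s2: "0 < s2" "state (mix (1 - (-1) * s2) p q)"
      "support (mix (1 - (-1) * s2) p q) \<subset> support p"
    using state_exit_along_line[OF p q(1,2) a2(1) x', of "-1"] a2(2) by auto
  define \<theta> where "\<theta> = s2 / (s1 + s2)"
  have \<theta>: "0 \<le> \<theta>" "\<theta> \<le> 1" "\<theta> * s1 = (1 - \<theta>) * s2"
    using s1(1) s2(1) by (auto simp: \<theta>_def field_simps)
  have "p = mix \<theta> (mix (1 - 1 * s1) p q) (mix (1 - (-1) * s2) p q)"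
  proof (intro ext)
    fix a x
    have "mix \<theta> (mix (1 - 1 * s1) p q) (mix (1 - (-1) * s2) p q) a x =
        p a x + (q a x - p a x) * (\<theta> * s1 - (1 - \<theta>) * s2)"
      by (simp add: algebra_simps)
    thus "p a x = mix \<theta> (mix (1 - 1 * s1) p q) (mix (1 - (-1) * s2) p q) a x" using \<theta>(3) by simp
  qed
  with s1 s2 \<theta> that show thesis by blast
qed

lemma vertex_induct [consumes 1, case_names vertex mix]:
  assumes "state p"
    and vertex: "\<And>p. vertex_state p \<Longrightarrow> P p"
    and mix: "\<And>p1 p2 \<theta>. state p1 \<Longrightarrow> state p2 \<Longrightarrow> 0 \<le> \<theta> \<Longrightarrow> \<theta> \<le> 1 \<Longrightarrow> P p1 \<Longrightarrow> P p2 \<Longrightarrow>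
      P (mix \<theta> p1 p2)"
  shows "P p"
  using assms(1)
proof (induction "card (support p)" arbitrary: p rule: less_induct)
  case less
  show ?case
  proof (cases "vertex_state p")
    case False
    then obtain p1 p2 \<theta> where split: "state p1" "state p2" "0 \<le> \<theta>" "\<theta> \<le> 1"
      "support p1 \<subset> support p" "support p2 \<subset> support p" "p = mix \<theta> p1 p2"
      using non_vertex_state_split[OF less.prems] by blast
    have "P p1" using less.hyps[OF psubset_card_mono[OF finite_support split(5)] split(1)] .
    moreover have "P p2" using less.hyps[OF psubset_card_mono[OF finite_support split(6)] split(2)] .
    ultimately show ?thesis using mix[OF split(1-4)] split(7) by simp
  qed (rule vertex)
qed

lemma finite_vertex_states: "finite {p. vertex_state p}"
proof (rule inj_on_finite[of support _ "Pow (outputs \<times> inputs)"])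
  show "inj_on support {p. vertex_state p}" unfolding inj_on_def vertex_state_def by auto
  show "support ` {p. vertex_state p} \<subseteq> Pow (outputs \<times> inputs)" by (auto simp: support_def)
  show "finite (Pow (outputs \<times> inputs))" by (simp add: finite_outputs finite_inputs)
qed

subsection \<open>Every nonzero effect dominates a multiple of some entry\<close>

lemma effect_pos_at_vertex:
  assumes \<mu>: "effect \<mu>" and p0: "state p0" and nonzero: "\<mu> p0 \<noteq> 0"
  obtains b where "vertex_state b" "0 < \<mu> b"
proof (rule ccontr)
  assume "\<not> thesis"
  hence "\<forall>b. vertex_state b \<longrightarrow> \<not> 0 < \<mu> b" using that by blast
  hence vertex_zero: "\<mu> b = 0" if "vertex_state b" for b
    using that effect_nonneg[OF \<mu>, of b] by (force simp: vertex_state_def)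
  have "\<mu> p0 = 0" using p0
  proof (induct rule: vertex_induct)
    case (vertex p) thus ?case by (rule vertex_zero)
  next
    case (mix p1 p2 \<theta>) thus ?case using effect_mix[OF \<mu> mix(1-4)] by (simp add: mix_def)
  qed
  thus False using nonzero by simp
qed

lemma state_positive_on_kernel:
  assumes \<mu>: "effect \<mu>" and S: "finite S" "S \<noteq> {}"
    and pos: "\<And>a x. (a, x) \<in> S \<Longrightarrow> \<exists>p. state p \<and> \<mu> p = 0 \<and> 0 < p a x"
  shows "\<exists>g. state g \<and> \<mu> g = 0 \<and> (\<forall>(a, x)\<in>S. 0 < g a x)"
  using S pos
proof (induction S rule: finite_ne_induct)
  case (singleton e)
  thus ?case by (cases e) auto
next
  case (insert e S)
  obtain g where g: "state g" "\<mu> g = 0" "\<forall>(a, x)\<in>S. 0 < g a x" using insert by blast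
  obtain a x where e: "e = (a, x)" by (cases e)
  obtain p where p: "state p" "\<mu> p = 0" "0 < p a x" using insert.prems e by blast
  have "state (mix (1/2) g p)" using state_mix[OF g(1) p(1)] by simp
  moreover have "\<mu> (mix (1/2) g p) = 0" using effect_mix[OF \<mu> g(1) p(1), of "1/2"] g p by simp
  moreover have "0 < mix (1/2) g p a' x'" if "(a', x') \<in> insert e S" for a' x'
    using that e g(3) p(3) state_nonneg[OF g(1), of a' x'] state_nonneg[OF p(1), of a' x'] by auto
  ultimately show ?case by blast
qed

text \<open>If every entry in the support of b were positive on some state annihilated by the effect,
  a mixture of those states would dominate a multiple of b, and so could not be annihilated.\<close>

lemma effect_detects_entry:
  assumes \<mu>: "effect \<mu>" and b: "state b" and pos: "0 < \<mu> b"
  obtains a0 x0 where "(a0, x0) \<in> support b" "\<And>p. state p \<Longrightarrow> \<mu> p = 0 \<Longrightarrow> p a0 x0 = 0"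
proof (rule ccontr)
  assume "\<not> thesis"
  hence "\<forall>(a, x)\<in>support b. \<exists>p. state p \<and> \<mu> p = 0 \<and> p a x \<noteq> 0" using that by blast
  hence "\<exists>p. state p \<and> \<mu> p = 0 \<and> 0 < p a x" if "(a, x) \<in> support b" for a x
    using that state_nonneg by (force simp: less_le)
  moreover have "support b \<noteq> {}"
  proof -
    obtain x where x: "x \<in> inputs" using inputs_nonempty by blast
    then obtain a where "a \<in> outputs" "b a x \<noteq> 0"
      using state_sum_outputs[OF b x] by (metis sum.neutral zero_neq_one)
    thus ?thesis using x by (auto simp: support_def)
  qed
  ultimately obtain g where g: "state g" "\<mu> g = 0" and g_pos: "\<forall>(a, x)\<in>support b. 0 < g a x"
    using state_positive_on_kernel[OF \<mu> finite_support] by blast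
  have b_pos: "0 < b a x" if "(a, x) \<in> support b" for a x
    using that state_nonneg[OF b, of a x] by (auto simp: support_def)
  define ratios where "ratios = (\<lambda>(a, x). g a x / b a x) ` support b"
  define l where "l = min (1/2) (Min ratios)"
  have "finite ratios" "ratios \<noteq> {}"
    unfolding ratios_def using finite_support \<open>support b \<noteq> {}\<close> by auto
  hence "0 < Min ratios" using g_pos b_pos by (auto simp: ratios_def)
  hence l: "0 < l" "l < 1" by (auto simp: l_def)
  have below: "l * b a x \<le> g a x" if "a \<in> outputs" "x \<in> inputs" for a x
  proof (cases "(a, x) \<in> support b")
    case True
    have "l \<le> g a x / b a x"
      using True \<open>finite ratios\<close> by (auto simp: l_def ratios_def intro!: min.coboundedI2 Min_le)
    thus ?thesis using b_pos[OF True] by (simp add: le_divide_eq)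
  next
    case False
    thus ?thesis using that state_nonneg[OF g(1), of a x] by (simp add: support_def)
  qed
  obtain w where w: "state w" "g = mix l b w"
    using state_peel_off[OF g(1) b _ l(2) below] l(1) by auto
  have "\<mu> g = l * \<mu> b + (1 - l) * \<mu> w" using w effect_mix[OF \<mu> b w(1)] l by simp
  moreover have "0 \<le> (1 - l) * \<mu> w" using effect_nonneg[OF \<mu> w(1)] l by simp
  ultimately have "0 < \<mu> g" using l pos by (smt (verit) mult_pos_pos)
  thus False using g(2) by simp
qed

lemma effect_dominates_entry:
  assumes \<mu>: "effect \<mu>" and p0: "state p0" and nonzero: "\<mu> p0 \<noteq> 0"
  obtains a0 x0 \<epsilon> where "a0 \<in> outputs" "x0 \<in> inputs" "0 < \<epsilon>" "\<And>p. state p \<Longrightarrow> \<epsilon> * p a0 x0 \<le> \<mu> p"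
proof -
  obtain b0 where b0: "vertex_state b0" "0 < \<mu> b0" by (rule effect_pos_at_vertex[OF \<mu> p0 nonzero])
  have "state b0" using b0(1) by (simp add: vertex_state_def)
  then obtain a0 x0 where e: "(a0, x0) \<in> support b0"
    and detect: "\<And>p. state p \<Longrightarrow> \<mu> p = 0 \<Longrightarrow> p a0 x0 = 0"
    using effect_detects_entry[OF \<mu> _ b0(2)] by blast
  have a0: "a0 \<in> outputs" and x0: "x0 \<in> inputs" using e by (auto simp: support_def)
  define Bs where "Bs = {b. vertex_state b \<and> 0 < b a0 x0}"
  define ratios where "ratios = (\<lambda>b. \<mu> b / b a0 x0) ` Bs"
  define \<epsilon> where "\<epsilon> = Min ratios"
  have "finite Bs" unfolding Bs_def by (rule finite_subset[OF _ finite_vertex_states]) auto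
  have "b0 \<in> Bs"
    using b0(1) e state_nonneg[OF \<open>state b0\<close>, of a0 x0] by (auto simp: Bs_def support_def less_le)
  have ratio_pos: "0 < \<mu> b / b a0 x0" if "b \<in> Bs" for b
  proof -
    have b: "state b" "0 < b a0 x0" using that by (auto simp: Bs_def vertex_state_def)
    hence "\<mu> b \<noteq> 0" using detect[OF b(1)] by auto
    thus ?thesis using effect_nonneg[OF \<mu> b(1)] b(2) by simp
  qed
  have "\<epsilon> \<in> ratios" unfolding \<epsilon>_def ratios_def using \<open>finite Bs\<close> \<open>b0 \<in> Bs\<close> by (intro Min_in) auto
  hence "0 < \<epsilon>" using ratio_pos by (auto simp: ratios_def)
  have "\<epsilon> * p a0 x0 \<le> \<mu> p" if "state p" for p
    using that
  proof (induct rule: vertex_induct)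
    case (vertex b)
    hence b: "state b" by (simp add: vertex_state_def)
    show ?case
    proof (cases "0 < b a0 x0")
      case True
      hence "b \<in> Bs" using vertex by (simp add: Bs_def)
      hence "\<epsilon> \<le> \<mu> b / b a0 x0" using \<open>finite Bs\<close> by (auto simp: \<epsilon>_def ratios_def)
      thus ?thesis using True by (simp add: le_divide_eq)
    next
      case False
      hence "b a0 x0 = 0" using state_nonneg[OF b, of a0 x0] by simp
      thus ?thesis using effect_nonneg[OF \<mu> b] by simp
    qed
  next
    case (mix p1 p2 \<theta>)
    have "\<epsilon> * mix \<theta> p1 p2 a0 x0 = \<theta> * (\<epsilon> * p1 a0 x0) + (1 - \<theta>) * (\<epsilon> * p2 a0 x0)"
      by (simp add: algebra_simps)
    also have "\<dots> \<le> \<theta> * \<mu> p1 + (1 - \<theta>) * \<mu> p2"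
      using mix by (intro add_mono mult_left_mono) auto
    also have "\<dots> = \<mu> (mix \<theta> p1 p2)" using effect_mix[OF \<mu> mix(1-4)] by simp
    finally show ?case .
  qed
  with a0 x0 \<open>0 < \<epsilon>\<close> that show thesis by blast
qed

lemma effect_parts:
  assumes \<mu>: "effect \<mu>"
    and affine: "\<And>p q t. state p \<Longrightarrow> state q \<Longrightarrow> 0 \<le> t \<Longrightarrow> t \<le> 1 \<Longrightarrow>
      \<nu> (mix t p q) = t * \<nu> p + (1 - t) * \<nu> q"
    and bounds: "\<And>p. state p \<Longrightarrow> 0 \<le> \<nu> p \<and> \<nu> p \<le> \<mu> p"
  shows "effect \<nu>" and "effect (\<lambda>p. \<mu> p - \<nu> p)"
proof -
  show "effect \<nu>"
    unfolding effect_iff using affine bounds effect_le_1[OF \<mu>] by (blast intro: order_trans)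
  show "effect (\<lambda>p. \<mu> p - \<nu> p)"
    unfolding effect_iff
  proof (intro conjI allI impI)
    fix p assume p: "state p"
    show "0 \<le> \<mu> p - \<nu> p" "\<mu> p - \<nu> p \<le> 1"
      using bounds[OF p] effect_le_1[OF \<mu> p] by auto
  next
    fix p q and t :: real assume "state p" "state q" "0 \<le> t" "t \<le> 1"
    thus "\<mu> (mix t p q) - \<nu> (mix t p q) = t * (\<mu> p - \<nu> p) + (1 - t) * (\<mu> q - \<nu> q)"
      using effect_mix[OF \<mu>] affine by (simp add: algebra_simps)
  qed
qed

text \<open>Outcomes are relabelled by 0, ..., card Out - 1, and the second part of r gets the label card Out.\<close>

lemma refinement_splitting_outcome:
  assumes M: "box_measurement n A X Out \<mu>" and r: "r \<in> Out"
    and \<nu>1: "effect \<nu>1" and \<nu>2: "effect \<nu>2" and split: "\<And>p. state p \<Longrightarrow> \<mu> r p = \<nu>1 p + \<nu>2 p"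
  obtains Out' :: "nat set" and \<nu> f s0
  where "box_refines_via n A X Out' \<nu> f Out \<mu>" "s0 \<in> Out'" "f s0 = r" "\<nu> s0 = \<nu>1"
proof -
  have fin: "finite Out" and effects: "\<And>r. r \<in> Out \<Longrightarrow> effect (\<mu> r)"
    and total: "\<And>p. state p \<Longrightarrow> (\<Sum>r\<in>Out. \<mu> r p) = 1"
    using M unfolding box_measurement_def by blast+
  define N where "N = card Out"
  obtain h where h: "bij_betw h {..<N} Out"
    using ex_bij_betw_nat_finite[OF fin] unfolding N_def atLeast0LessThan by blast
  have h_in: "s < N \<Longrightarrow> h s \<in> Out" for s using h by (auto simp: bij_betw_def)
  have h_inj: "s < N \<Longrightarrow> s' < N \<Longrightarrow> h s = h s' \<Longrightarrow> s = s'" for s s'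
    using h by (auto simp: bij_betw_def inj_on_def)
  have h_onto: "r' \<in> Out \<Longrightarrow> \<exists>s<N. h s = r'" for r'
    using h by (force simp: bij_betw_def)
  obtain s0 where s0: "s0 < N" "h s0 = r" using h_onto[OF r] by blast
  define Out' where "Out' = {..<Suc N}"
  define f where "f s = (if s < N then h s else r)" for s
  define \<nu> where "\<nu> s = (if s < N then (if h s = r then \<nu>1 else \<mu> (h s)) else \<nu>2)" for s
  have fibre: "{s \<in> Out'. f s = r'} = (if r' = r then {s', N} else {s'})"
    if "s' < N" "h s' = r'" for s' r'
    using that h_inj by (auto simp: Out'_def f_def less_Suc_eq)
  have "box_refines_via n A X Out' \<nu> f Out \<mu>"
    unfolding box_refines_via_def box_measurement_def
  proof (intro conjI ballI allI impI)
    show "finite Out'" by (simp add: Out'_def)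
  next
    fix s assume "s \<in> Out'"
    show "effect (\<nu> s)" unfolding \<nu>_def using \<nu>1 \<nu>2 effects h_in by auto
    show "f s \<in> Out" unfolding f_def using h_in r by auto
  next
    fix p assume p: "state p"
    have "(\<Sum>s\<in>Out'. \<nu> s p) = (\<Sum>s<N. \<nu> s p) + \<nu>2 p"
      by (simp add: Out'_def \<nu>_def)
    also have "(\<Sum>s<N. \<nu> s p) = (\<Sum>s<N. (\<lambda>r'. if r' = r then \<nu>1 p else \<mu> r' p) (h s))"
      by (rule sum.cong) (auto simp: \<nu>_def)
    also have "\<dots> = (\<Sum>r'\<in>Out. if r' = r then \<nu>1 p else \<mu> r' p)"
      by (rule sum.reindex_bij_betw[OF h])
    also have "\<dots> = (\<Sum>r'\<in>Out. \<mu> r' p) - \<nu>2 p"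
      using fin r split[OF p] by (simp add: sum.If_cases Diff_eq[symmetric] sum_diff1)
    finally show "(\<Sum>s\<in>Out'. \<nu> s p) = 1" using total[OF p] by simp
  next
    fix r' p assume r': "r' \<in> Out" and p: "state p"
    obtain s' where s': "s' < N" "h s' = r'" using h_onto[OF r'] by blast
    show "\<mu> r' p = (\<Sum>s\<in>{s \<in> Out'. f s = r'}. \<nu> s p)"
      using s' split[OF p] by (simp add: fibre \<nu>_def)
  qed
  moreover have "s0 \<in> Out'" "f s0 = r" "\<nu> s0 = \<nu>1" using s0 by (simp_all add: Out'_def f_def \<nu>_def)
  ultimately show thesis using that by blast
qed

lemma refinement_vanishes:
  assumes ref: "box_refines_via n A X Out' \<nu> f Out \<mu>" and s: "s \<in> Out'"
    and p: "state p" and zero: "\<mu> (f s) p = 0"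
  shows "\<nu> s p = 0"
proof -
  have fin: "finite Out'" and effects: "\<And>s. s \<in> Out' \<Longrightarrow> effect (\<nu> s)"
    and "f s \<in> Out"
    and fibre: "\<mu> (f s) p = (\<Sum>s'\<in>{s' \<in> Out'. f s' = f s}. \<nu> s' p)"
    using ref s p unfolding box_refines_via_def box_measurement_def by blast+
  have "\<forall>s'\<in>{s' \<in> Out'. f s' = f s}. \<nu> s' p = 0"
    using fibre zero fin effect_nonneg[OF effects p] by (subst sum_nonneg_eq_0_iff[symmetric]) auto
  thus ?thesis using s by blast
qed

subsection \<open>Effects proportional to a single entry\<close>

definition scaled_entry_effect :: "(((nat \<Rightarrow> 'a) \<Rightarrow> (nat \<Rightarrow> 'x) \<Rightarrow> real) \<Rightarrow> real) \<Rightarrow> bool" where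
  "scaled_entry_effect \<mu> \<longleftrightarrow>
    (\<exists>a0\<in>outputs. \<exists>x0\<in>inputs. \<exists>\<kappa>. 0 < \<kappa> \<and> \<kappa> \<le> 1 \<and> (\<forall>p. state p \<longrightarrow> \<mu> p = \<kappa> * p a0 x0))"

lemma sum_single_entry:
  fixes p R :: "(nat \<Rightarrow> 'a) \<Rightarrow> (nat \<Rightarrow> 'x) \<Rightarrow> real"
  assumes a0: "a0 \<in> outputs" and x0: "x0 \<in> inputs"
    and zero: "\<And>a x. a \<in> outputs \<Longrightarrow> x \<in> inputs \<Longrightarrow> (a, x) \<noteq> (a0, x0) \<Longrightarrow> R a x = 0"
  shows "(\<Sum>a\<in>outputs. \<Sum>x\<in>inputs. p a x * R a x) = p a0 x0 * R a0 x0"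
proof -
  have row: "(\<Sum>x\<in>inputs. p a x * R a x) = (if a = a0 then p a0 x0 * R a0 x0 else 0)"
    if a: "a \<in> outputs" for a
  proof -
    have "(\<Sum>x\<in>inputs. p a x * R a x) =
        (\<Sum>x\<in>inputs. if x = x0 then (if a = a0 then p a0 x0 * R a0 x0 else 0) else 0)"
    proof (rule sum.cong[OF refl])
      fix x assume x: "x \<in> inputs"
      show "p a x * R a x = (if x = x0 then (if a = a0 then p a0 x0 * R a0 x0 else 0) else 0)"
        using zero[OF a x] by auto
    qed
    also have "\<dots> = (if a = a0 then p a0 x0 * R a0 x0 else 0)" using x0 finite_inputs by simp
    finally show ?thesis .
  qed
  have "(\<Sum>a\<in>outputs. \<Sum>x\<in>inputs. p a x * R a x) =
      (\<Sum>a\<in>outputs. if a = a0 then p a0 x0 * R a0 x0 else 0)"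
    using row by (rule sum.cong[OF refl])
  also have "\<dots> = p a0 x0 * R a0 x0" using a0 finite_outputs by simp
  finally show ?thesis .
qed

definition single_entry_vector :: "((nat \<Rightarrow> 'a) \<Rightarrow> (nat \<Rightarrow> 'x) \<Rightarrow> real) \<Rightarrow> bool" where
  "single_entry_vector R \<longleftrightarrow>
    (\<exists>!ax. ax \<in> outputs \<times> inputs \<and> R (fst ax) (snd ax) \<noteq> 0) \<and>
    (\<forall>a\<in>outputs. \<forall>x\<in>inputs. R a x \<noteq> 0 \<longrightarrow> 0 < R a x \<and> R a x \<le> 1)"

lemma scaled_entry_effect_if_represented:
  assumes rep: "box_represents n A X R \<mu>" and R: "single_entry_vector R"
  shows "scaled_entry_effect \<mu>"
proof -
  obtain ax where ax: "ax \<in> outputs \<times> inputs \<and> R (fst ax) (snd ax) \<noteq> 0"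
    and only: "\<forall>ay. ay \<in> outputs \<times> inputs \<and> R (fst ay) (snd ay) \<noteq> 0 \<longrightarrow> ay = ax"
    using R[unfolded single_entry_vector_def, THEN conjunct1] by (rule ex1E)
  define a0 where "a0 = fst ax"
  define x0 where "x0 = snd ax"
  have entry: "a0 \<in> outputs" "x0 \<in> inputs" "R a0 x0 \<noteq> 0"
    using ax unfolding a0_def x0_def mem_Times_iff by simp_all
  have zero: "R a x = 0" if "a \<in> outputs" "x \<in> inputs" "(a, x) \<noteq> (a0, x0)" for a x
  proof (rule ccontr)
    assume "R a x \<noteq> 0"
    hence "(a, x) = ax" using only that by auto
    thus False using that(3) by (auto simp: a0_def x0_def)
  qed
  have "\<mu> p = R a0 x0 * p a0 x0" if "state p" for p
    using rep that sum_single_entry[OF entry(1,2) zero, where p = p] by (simp add: box_represents_def)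
  moreover have "\<forall>a\<in>outputs. \<forall>x\<in>inputs. R a x \<noteq> 0 \<longrightarrow> 0 < R a x \<and> R a x \<le> 1"
    using R unfolding single_entry_vector_def by (rule conjunct2)
  ultimately show ?thesis
    using entry unfolding scaled_entry_effect_def by blast
qed

lemma represented_if_scaled_entry_effect:
  assumes "scaled_entry_effect \<mu>"
  obtains R where "box_represents n A X R \<mu>" "single_entry_vector R"
proof -
  obtain a0 x0 \<kappa> where a0: "a0 \<in> outputs" and x0: "x0 \<in> inputs" and \<kappa>: "0 < \<kappa>" "\<kappa> \<le> 1"
    and rep: "\<And>p. state p \<Longrightarrow> \<mu> p = \<kappa> * p a0 x0"
    using assms unfolding scaled_entry_effect_def by blast
  define R where "R a x = (if (a, x) = (a0, x0) then \<kappa> else 0)" for a x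
  have "(\<Sum>a\<in>outputs. \<Sum>x\<in>inputs. p a x * R a x) = p a0 x0 * \<kappa>" for p
    by (subst sum_single_entry[OF a0 x0]) (auto simp: R_def)
  hence "box_represents n A X R \<mu>" unfolding box_represents_def using rep by (simp add: mult.commute)
  moreover have "single_entry_vector R"
    unfolding single_entry_vector_def
  proof
    show "\<exists>!ax. ax \<in> outputs \<times> inputs \<and> R (fst ax) (snd ax) \<noteq> 0"
    proof (rule ex1I[of _ "(a0, x0)"])
      show "(a0, x0) \<in> outputs \<times> inputs \<and> R (fst (a0, x0)) (snd (a0, x0)) \<noteq> 0"
        using a0 x0 \<kappa> by (simp add: R_def)
    next
      fix ax assume "ax \<in> outputs \<times> inputs \<and> R (fst ax) (snd ax) \<noteq> 0"
      thus "ax = (a0, x0)" by (cases ax) (auto simp: R_def split: if_splits)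
    qed
    show "\<forall>a\<in>outputs. \<forall>x\<in>inputs. R a x \<noteq> 0 \<longrightarrow> 0 < R a x \<and> R a x \<le> 1"
      using \<kappa> by (simp add: R_def)
  qed
  ultimately show thesis by (rule that)
qed

lemma represented_by_single_entry_iff:
  "(\<exists>R. box_represents n A X R \<mu> \<and> single_entry_vector R) \<longleftrightarrow> scaled_entry_effect \<mu>"
proof
  assume "\<exists>R. box_represents n A X R \<mu> \<and> single_entry_vector R"
  thus "scaled_entry_effect \<mu>" using scaled_entry_effect_if_represented by blast
next
  assume "scaled_entry_effect \<mu>"
  then obtain R where "box_represents n A X R \<mu>" "single_entry_vector R"
    by (rule represented_if_scaled_entry_effect)
  thus "\<exists>R. box_represents n A X R \<mu> \<and> single_entry_vector R" by blast
qed

text \<open>Splitting off the part \<epsilon> * p a0 x0 dominated by \<mu> r must be a trivial refinement.\<close>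

lemma max_informative_imp_scaled_entry:
  assumes M: "box_measurement n A X Out \<mu>" and max_inf: "box_max_informative n A X Out \<mu>"
    and r: "r \<in> Out" and p0: "state p0" and nonzero: "\<mu> r p0 \<noteq> 0"
  shows "scaled_entry_effect (\<mu> r)"
proof -
  have \<mu>r: "effect (\<mu> r)" using M r by (simp add: box_measurement_def)
  obtain a0 x0 \<epsilon> where a0: "a0 \<in> outputs" and x0: "x0 \<in> inputs" and \<epsilon>: "0 < \<epsilon>"
    and dominated: "\<And>p. state p \<Longrightarrow> \<epsilon> * p a0 x0 \<le> \<mu> r p"
    using effect_dominates_entry[OF \<mu>r p0 nonzero] by blast
  define \<nu>1 where "\<nu>1 p = \<epsilon> * p a0 x0" for p :: "(nat \<Rightarrow> 'a) \<Rightarrow> (nat \<Rightarrow> 'x) \<Rightarrow> real"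
  have "\<nu>1 (mix t p q) = t * \<nu>1 p + (1 - t) * \<nu>1 q" for p q t
    by (simp add: \<nu>1_def algebra_simps)
  moreover have "0 \<le> \<nu>1 p \<and> \<nu>1 p \<le> \<mu> r p" if "state p" for p
    using \<epsilon> dominated[OF that] state_nonneg[OF that] by (simp add: \<nu>1_def)
  ultimately have parts: "effect \<nu>1" "effect (\<lambda>p. \<mu> r p - \<nu>1 p)"
    using effect_parts[OF \<mu>r] by blast+
  have split: "\<And>p. \<mu> r p = \<nu>1 p + (\<mu> r p - \<nu>1 p)" by simp
  obtain Out' :: "nat set" and \<nu> f s0 where ref: "box_refines_via n A X Out' \<nu> f Out \<mu>"
    and s0: "s0 \<in> Out'" "f s0 = r" "\<nu> s0 = \<nu>1"
    by (rule refinement_splitting_outcome[OF M r parts split])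
  have "box_trivial_via n A X Out' \<nu> f \<mu>" using max_inf ref unfolding box_max_informative_def by blast
  then obtain c where "\<And>p. state p \<Longrightarrow> \<nu> s0 p = c * \<mu> (f s0) p"
    using s0(1) unfolding box_trivial_via_def by blast
  hence c: "\<And>p. state p \<Longrightarrow> \<epsilon> * p a0 x0 = c * \<mu> r p" using s0 by (simp add: \<nu>1_def)
  define \<kappa> where "\<kappa> = \<mu> r (deterministic a0)"
  have det: "state (deterministic a0)" "deterministic a0 a0 x0 = 1"
    using state_deterministic[OF a0] x0 by (simp_all add: deterministic_apply)
  have "\<epsilon> \<le> \<kappa>" "\<epsilon> = c * \<kappa>" using dominated[OF det(1)] c[OF det(1)] det(2) by (simp_all add: \<kappa>_def)
  hence "0 < \<kappa>" "c \<noteq> 0" using \<epsilon> by auto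
  moreover have "\<kappa> \<le> 1" unfolding \<kappa>_def by (rule effect_le_1[OF \<mu>r det(1)])
  moreover have "\<mu> r p = \<kappa> * p a0 x0" if "state p" for p
    using c[OF that] \<open>\<epsilon> = c * \<kappa>\<close> \<open>c \<noteq> 0\<close> by (simp add: algebra_simps)
  ultimately show ?thesis unfolding scaled_entry_effect_def using a0 x0 by blast
qed

lemma scaled_entries_imp_max_informative:
  assumes entries: "\<And>r. r \<in> Out \<Longrightarrow> scaled_entry_effect (\<mu> r)"
  shows "box_max_informative n A X Out \<mu>"
  unfolding box_max_informative_def box_trivial_via_def
proof (intro allI impI ballI)
  fix Out' :: "nat set" and \<nu> f s
  assume ref: "box_refines_via n A X Out' \<nu> f Out \<mu>" and s: "s \<in> Out'"
  have "f s \<in> Out" and \<nu>s: "effect (\<nu> s)"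
    using ref s unfolding box_refines_via_def box_measurement_def by blast+
  then obtain a0 x0 \<kappa> where a0: "a0 \<in> outputs" and x0: "x0 \<in> inputs" and \<kappa>: "0 < \<kappa>"
    and rep: "\<And>p. state p \<Longrightarrow> \<mu> (f s) p = \<kappa> * p a0 x0"
    using entries unfolding scaled_entry_effect_def by blast
  have vanish: "\<nu> s z = 0" if "state z" "z a0 x0 = 0" for z
    using refinement_vanishes[OF ref s that(1)] rep[OF that(1)] that(2) by simp
  have "\<nu> s p = p a0 x0 * \<nu> s (deterministic a0)" if "state p" for p
    by (rule effect_vanishing_off_entry[OF a0 x0 \<nu>s vanish that])
  thus "\<exists>c. \<forall>p. state p \<longrightarrow> \<nu> s p = c * \<mu> (f s) p"
    using rep \<kappa> by (intro exI[of _ "\<nu> s (deterministic a0) / \<kappa>"]) auto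
qed

end

theorem lemma3:
  fixes n :: nat and A :: "nat \<Rightarrow> 'a set" and X :: "nat \<Rightarrow> 'x set"
    and Out :: "'r set" and \<mu> :: "'r \<Rightarrow> ((nat \<Rightarrow> 'a) \<Rightarrow> (nat \<Rightarrow> 'x) \<Rightarrow> real) \<Rightarrow> real"
  assumes "box_system n A X"
    and "box_measurement n A X Out \<mu>"
    and "\<forall>r\<in>Out. \<exists>p. box_state n A X p \<and> \<mu> r p \<noteq> 0"
  shows "box_max_informative n A X Out \<mu> \<longleftrightarrow>
    (\<forall>r\<in>Out. \<exists>R. box_represents n A X R (\<mu> r) \<and>
       (\<exists>!ax. ax \<in> PiE {..<n} A \<times> PiE {..<n} X \<and> R (fst ax) (snd ax) \<noteq> 0) \<and>
       (\<forall>a\<in>PiE {..<n} A. \<forall>x\<in>PiE {..<n} X. R a x \<noteq> 0 \<longrightarrow> 0 < R a x \<and> R a x \<le> 1))"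
proof -
  interpret box_world n A X by unfold_locales (rule assms(1))
  have "box_max_informative n A X Out \<mu> \<longleftrightarrow> (\<forall>r\<in>Out. scaled_entry_effect (\<mu> r))"
  proof (intro iffI ballI)
    fix r assume max_inf: "box_max_informative n A X Out \<mu>" and r: "r \<in> Out"
    then obtain p where "state p" "\<mu> r p \<noteq> 0" using assms(3) by blast
    thus "scaled_entry_effect (\<mu> r)" by (rule max_informative_imp_scaled_entry[OF assms(2) max_inf r])
  qed (rule scaled_entries_imp_max_informative, blast)
  thus ?thesis unfolding represented_by_single_entry_iff[symmetric] single_entry_vector_def .
qed

end
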